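(* Let $R$ be a finite commutative ring. Then $R$ is an avoidance ring if and only if $R$ is a principal ideal ring.
   Context: All rings are commutative with $1\neq 0$. An ideal $I$ of a ring $R$ has avoidance if whenever $I_1,\ldots,I_n$ are finitely many ideals of $R$ with $I\subseteq\bigcup_{k=1}^n I_k$, then $I\subseteq I_k$ for some $k$. A ring is an avoidance ring if every ideal of it has avoidance. *)

theory Defs
  imports "HOL-Algebra.Ideal"
begin

definition has_avoidance :: "'a set \<Rightarrow> ('a, 'b) ring_scheme \<Rightarrow> bool" where
  "has_avoidance I R \<longleftrightarrow>
     (\<forall>F. finite F \<and> (\<forall>J\<in>F. ideal J R) \<and> I \<subseteq> \<Union>F \<longrightarrow> (\<exists>J\<in>F. I \<subseteq> J))"

definition avoidance_ring :: "('a, 'b) ring_scheme \<Rightarrow> bool" where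
  "avoidance_ring R \<longleftrightarrow> (\<forall>I. ideal I R \<longrightarrow> has_avoidance I R)"

definition principal_ideal_ring :: "('a, 'b) ring_scheme \<Rightarrow> bool" where
  "principal_ideal_ring R \<longleftrightarrow> (\<forall>I. ideal I R \<longrightarrow> principalideal I R)"

end

theory Submission
  imports Defs
begin

text \<open>A principal ideal lies in a union of ideals as soon as its generator does, so it
  has avoidance in any ring. Conversely every ideal is the union of the principal ideals
  of its elements; when the ideal is finite this is a finite cover, and avoidance puts the
  ideal inside one of them, making it principal.\<close>

lemma (in ring) principalideal_has_avoidance:
  assumes "principalideal I R"
  shows "has_avoidance I R"
  unfolding has_avoidance_def
proof (intro allI impI)
  fix F assume F: "finite F \<and> (\<forall>J\<in>F. ideal J R) \<and> I \<subseteq> \<Union>F"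
  from assms obtain a where a: "a \<in> carrier R" "I = Idl {a}"
    by (auto simp: principalideal_def principalideal_axioms_def)
  with F obtain J where J: "J \<in> F" "a \<in> J"
    using genideal_self' by blast
  with F have "Idl {a} \<subseteq> J"
    by (simp add: genideal_minimal)
  with a J show "\<exists>J\<in>F. I \<subseteq> J" by blast
qed

lemma (in ring) ideal_eq_Union_genideal_singletons:
  assumes "ideal I R"
  shows "I = (\<Union>a\<in>I. Idl {a})"
proof -
  have "I \<subseteq> carrier R"
    using assms by (simp add: ideal.Icarr subsetI)
  with assms show ?thesis
    using genideal_self' genideal_minimal by blast
qed

lemma (in ring) finite_ideal_with_avoidance_is_principal:
  assumes I: "ideal I R" and "finite I" and avoid: "has_avoidance I R"
  shows "principalideal I R"
proof -
  have carr: "I \<subseteq> carrier R"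
    using I by (simp add: ideal.Icarr subsetI)
  let ?F = "(\<lambda>a. Idl {a}) ` I"
  have "I \<subseteq> \<Union>?F"
    by (rule equalityD1[OF ideal_eq_Union_genideal_singletons[OF I]])
  moreover have "finite ?F" "\<forall>J\<in>?F. ideal J R"
    using \<open>finite I\<close> carr genideal_ideal by auto
  ultimately obtain a where a: "a \<in> I" "I \<subseteq> Idl {a}"
    using avoid unfolding has_avoidance_def by blast
  with I have "I = Idl {a}"
    using genideal_minimal by blast
  with I a carr show ?thesis
    by (intro principalidealI) auto
qed

theorem proposition3p17:
  fixes R :: "('a, 'b) ring_scheme"
  assumes "cring R" and "\<one>\<^bsub>R\<^esub> \<noteq> \<zero>\<^bsub>R\<^esub>" and "finite (carrier R)"
  shows "avoidance_ring R \<longleftrightarrow> principal_ideal_ring R"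
proof -
  interpret cring R by fact
  have "finite I" if "ideal I R" for I
    using assms(3) that by (meson ideal.Icarr rev_finite_subset subsetI)
  then show ?thesis
    unfolding avoidance_ring_def principal_ideal_ring_def
    by (meson principalideal_has_avoidance finite_ideal_with_avoidance_is_principal)
qed

end
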